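(* Let $\mathcal{Q}\subseteq 2^E$ ($E$ finite) be Rayleigh (respectively weakly Rayleigh). Then there are matroids $\mathcal{M}$ and $\mathcal{N}$ on $E$ such that $\mathcal{Q}=\mathbf{I}\mathcal{M}\cap\mathbf{S}\mathcal{N}$, where $\mathbf{I}\mathcal{M}$ is the set of independent sets of $\mathcal{M}$ and $\mathbf{S}\mathcal{N}$ the set of spanning sets of $\mathcal{N}$. Moreover, the sets of bases $\mathbf{B}\mathcal{M}$ and $\mathbf{B}\mathcal{N}$ are both Rayleigh (respectively weakly Rayleigh).
   Context: For $\omega:2^E\to[0,\infty)$ not identically zero, $Z(\omega;\mathbf{y})=\sum_S\omega(S)\prod_{e\in S}y_e$; with subscripts denoting partial derivatives, $Z$ is Rayleigh if $Z_eZ_f-Z_{ef}Z\ge0$ for all distinct $e,f$ and all positive $\mathbf{y}$. A set-system $\mathcal{Q}$ is Rayleigh if $Z(\mathcal{Q};\mathbf{y})=\sum_{S\in\mathcal{Q}}\prod_{e\in S}y_e$ is Rayleigh, and weakly Rayleigh if some $\omega\ge0$ with $\{S:\omega(S)>0\}=\mathcal{Q}$ has $Z(\omega;\mathbf{y})$ Rayleigh. *)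

theory Defs
  imports "HOL-Analysis.Analysis"
begin

definition matroid :: "'a set \<Rightarrow> 'a set set \<Rightarrow> bool" where
  "matroid E I \<longleftrightarrow> finite E \<and> I \<subseteq> Pow E \<and> {} \<in> I \<and>
     (\<forall>A\<in>I. \<forall>B. B \<subseteq> A \<longrightarrow> B \<in> I) \<and>
     (\<forall>A\<in>I. \<forall>B\<in>I. card A < card B \<longrightarrow> (\<exists>x\<in>B - A. insert x A \<in> I))"

definition bases :: "'a set set \<Rightarrow> 'a set set" where
  "bases I = {B \<in> I. \<forall>A\<in>I. B \<subseteq> A \<longrightarrow> A = B}"

definition spanning :: "'a set \<Rightarrow> 'a set set \<Rightarrow> 'a set set" where
  "spanning E I = {S. S \<subseteq> E \<and> (\<exists>B\<in>bases I. B \<subseteq> S)}"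

definition Zpoly :: "'a set \<Rightarrow> ('a set \<Rightarrow> real) \<Rightarrow> ('a \<Rightarrow> real) \<Rightarrow> real" where
  "Zpoly E \<omega> y = (\<Sum>S\<in>Pow E. \<omega> S * (\<Prod>e\<in>S. y e))"

definition pd :: "'a \<Rightarrow> (('a \<Rightarrow> real) \<Rightarrow> real) \<Rightarrow> ('a \<Rightarrow> real) \<Rightarrow> real" where
  "pd e F y = deriv (\<lambda>t. F (y(e := t))) (y e)"

definition rayleigh_weight :: "'a set \<Rightarrow> ('a set \<Rightarrow> real) \<Rightarrow> bool" where
  "rayleigh_weight E \<omega> \<longleftrightarrow>
     (\<forall>S. S \<subseteq> E \<longrightarrow> \<omega> S \<ge> 0) \<and> (\<exists>S. S \<subseteq> E \<and> \<omega> S \<noteq> 0) \<and>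
     (\<forall>e\<in>E. \<forall>f\<in>E. e \<noteq> f \<longrightarrow> (\<forall>y. (\<forall>x\<in>E. y x > 0) \<longrightarrow>
        pd e (Zpoly E \<omega>) y * pd f (Zpoly E \<omega>) y
          - pd e (pd f (Zpoly E \<omega>)) y * Zpoly E \<omega> y \<ge> 0))"

definition rayleigh :: "'a set \<Rightarrow> 'a set set \<Rightarrow> bool" where
  "rayleigh E Q \<longleftrightarrow> Q \<subseteq> Pow E \<and> rayleigh_weight E (\<lambda>S. if S \<in> Q then 1 else 0)"

definition weakly_rayleigh :: "'a set \<Rightarrow> 'a set set \<Rightarrow> bool" where
  "weakly_rayleigh E Q \<longleftrightarrow> Q \<subseteq> Pow E \<and>
     (\<exists>\<omega>. {S. S \<subseteq> E \<and> \<omega> S > 0} = Q \<and> rayleigh_weight E \<omega>)"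

end

(* Splitting off two variables e, f writes the Rayleigh difference Z_e Z_f - Z Z_ef as
   Z(beta) Z(gamma) - Z(alpha) Z(delta) for four deletion-contraction minors of the weight.
   Substituting y_x -> t^(w x) y_x and letting t -> infinity shows that this inequality survives
   passage to the parts of top w-degree.  Hence the top w-homogeneous part of a Rayleigh weight is
   again Rayleigh, and its support Q satisfies a max-plus exchange inequality for every weighting w.
   Suitable weightings turn that inequality into combinatorics: Q is convex, its inclusion-maximal
   (minimal) members have maximum (minimum) size, and an equicardinal such family satisfies the
   basis exchange axiom.  With w = 1 and w = -1 the largest and the smallest members of Q carry
   Rayleigh weights of their own, so they are the bases of matroids M and N, and convexity gives
   Q = I(M) \<inter> S(N). *)

theory Submission
  imports Defs
begin

lemma finite_obtains_max:
  fixes f :: "'b \<Rightarrow> 'c::linorder"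
  assumes "finite A" "A \<noteq> {}"
  obtains x where "x \<in> A" "\<And>y. y \<in> A \<Longrightarrow> f y \<le> f x"
  using obtains_MAX[OF assms, of f] Max_ge[OF finite_imageI[OF assms(1)]] by (metis imageI)

lemma finite_obtains_min:
  fixes f :: "'b \<Rightarrow> 'c::linorder"
  assumes "finite A" "A \<noteq> {}"
  obtains x where "x \<in> A" "\<And>y. y \<in> A \<Longrightarrow> f x \<le> f y"
  using obtains_MIN[OF assms, of f] Min_le[OF finite_imageI[OF assms(1)]] by (metis imageI)

section \<open>Deletion, contraction and the Rayleigh difference\<close>

definition deletion :: "'a \<Rightarrow> ('a set \<Rightarrow> real) \<Rightarrow> 'a set \<Rightarrow> real" where
  "deletion e \<omega> U = (if e \<in> U then 0 else \<omega> U)"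

definition contraction :: "'a \<Rightarrow> ('a set \<Rightarrow> real) \<Rightarrow> 'a set \<Rightarrow> real" where
  "contraction e \<omega> U = (if e \<in> U then 0 else \<omega> (insert e U))"

lemma Zpoly_cong: "(\<And>U. U \<subseteq> E \<Longrightarrow> \<phi> U = \<psi> U) \<Longrightarrow> Zpoly E \<phi> y = Zpoly E \<psi> y"
  unfolding Zpoly_def by (intro sum.cong) auto

lemma Zpoly_deletion_contraction:
  assumes "finite E" "e \<in> E"
  shows "Zpoly E \<omega> y = Zpoly E (deletion e \<omega>) y + y e * Zpoly E (contraction e \<omega>) y"
proof -
  let ?P = "Pow (E - {e})"
  have Pow_E: "Pow E = ?P \<union> insert e ` ?P"
    using Pow_insert[of e "E - {e}"] assms(2) by (simp add: insert_absorb)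
  have inj: "inj_on (insert e) ?P"
    by (rule inj_onI) (metis Diff_insert_absorb PowD insert_Diff_single subset_Diff_insert)
  have split: "Zpoly E \<phi> y
      = (\<Sum>U\<in>?P. \<phi> U * prod y U) + (\<Sum>U\<in>?P. \<phi> (insert e U) * prod y (insert e U))"
    for \<phi>
    unfolding Zpoly_def Pow_E
    by (subst sum.union_disjoint) (auto simp: sum.reindex[OF inj] assms(1))
  have e_notin: "e \<notin> U" if "U \<subseteq> E - {e}" for U
    using that by blast
  have prod_insert_e: "prod y (insert e U) = y e * prod y U" if "U \<subseteq> E - {e}" for U
    using e_notin[OF that] finite_subset[OF that] assms(1) by simp
  show ?thesis
    unfolding split[of \<omega>] split[of "deletion e \<omega>"] split[of "contraction e \<omega>"]
    by (auto simp: deletion_def contraction_def sum_distrib_left e_notin prod_insert_e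
        intro!: arg_cong2[where f = "(+)"] sum.cong)
qed

lemma Zpoly_fun_upd:
  assumes "\<And>U. e \<in> U \<Longrightarrow> \<phi> U = 0"
  shows "Zpoly E \<phi> (y(e := t)) = Zpoly E \<phi> y"
  unfolding Zpoly_def using assms by (intro sum.cong) (auto intro!: prod.cong)

lemma pd_Zpoly:
  assumes "finite E" "e \<in> E"
  shows "pd e (Zpoly E \<omega>) = Zpoly E (contraction e \<omega>)"
proof
  fix y :: "'a \<Rightarrow> real"
  have "(\<lambda>t. Zpoly E \<omega> (y(e := t)))
      = (\<lambda>t. Zpoly E (deletion e \<omega>) y + t * Zpoly E (contraction e \<omega>) y)"
    by (subst Zpoly_deletion_contraction[OF assms])
       (simp add: Zpoly_fun_upd deletion_def contraction_def)
  moreover have "((\<lambda>t. Zpoly E (deletion e \<omega>) y + t * Zpoly E (contraction e \<omega>) y)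
      has_field_derivative Zpoly E (contraction e \<omega>) y) (at (y e))"
    by (auto intro!: derivative_eq_intros)
  ultimately show "pd e (Zpoly E \<omega>) y = Zpoly E (contraction e \<omega>) y"
    unfolding pd_def by (simp add: DERIV_imp_deriv)
qed

lemma contraction_commute:
  "e \<noteq> f \<Longrightarrow> contraction f (contraction e \<omega>) = contraction e (contraction f \<omega>)"
  by (auto simp: contraction_def insert_commute)

lemma contraction_deletion_commute:
  "e \<noteq> f \<Longrightarrow> contraction f (deletion e \<omega>) = deletion e (contraction f \<omega>)"
  by (auto simp: deletion_def contraction_def)

lemma rayleigh_difference_eq:
  assumes "finite E" "e \<in> E" "f \<in> E" "e \<noteq> f"
  shows "pd e (Zpoly E \<omega>) y * pd f (Zpoly E \<omega>) y - pd e (pd f (Zpoly E \<omega>)) y * Zpoly E \<omega> y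
    = Zpoly E (deletion f (contraction e \<omega>)) y * Zpoly E (deletion e (contraction f \<omega>)) y
      - Zpoly E (deletion f (deletion e \<omega>)) y * Zpoly E (contraction e (contraction f \<omega>)) y"
proof -
  note split_e = Zpoly_deletion_contraction[OF assms(1,2)]
    and split_f = Zpoly_deletion_contraction[OF assms(1,3)]
  have "Zpoly E \<omega> y = Zpoly E (deletion f (deletion e \<omega>)) y
      + y f * Zpoly E (deletion e (contraction f \<omega>)) y
      + y e * (Zpoly E (deletion f (contraction e \<omega>)) y
               + y f * Zpoly E (contraction e (contraction f \<omega>)) y)"
    using split_e[of \<omega>] split_f[of "deletion e \<omega>"] split_f[of "contraction e \<omega>"]
    by (simp add: contraction_commute[OF assms(4)] contraction_deletion_commute[OF assms(4)])
  moreover have "pd e (Zpoly E \<omega>) y = Zpoly E (deletion f (contraction e \<omega>)) y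
      + y f * Zpoly E (contraction e (contraction f \<omega>)) y"
    using pd_Zpoly[OF assms(1,2)] split_f[of "contraction e \<omega>"]
    by (simp add: contraction_commute[OF assms(4)])
  moreover have "pd f (Zpoly E \<omega>) y = Zpoly E (deletion e (contraction f \<omega>)) y
      + y e * Zpoly E (contraction e (contraction f \<omega>)) y"
    using pd_Zpoly[OF assms(1,3)] split_e[of "contraction f \<omega>"] by simp
  moreover have "pd e (pd f (Zpoly E \<omega>)) y = Zpoly E (contraction e (contraction f \<omega>)) y"
    by (simp add: pd_Zpoly assms)
  ultimately show ?thesis by (simp add: algebra_simps)
qed

lemma rayleigh_weight_nonneg:
  assumes "rayleigh_weight E \<omega>" "S \<subseteq> E"
  shows "0 \<le> \<omega> S"
  using assms(1)[unfolded rayleigh_weight_def, THEN conjunct1] assms(2) by blast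

lemma rayleigh_weight_nonzero:
  assumes "rayleigh_weight E \<omega>"
  obtains S where "S \<subseteq> E" "\<omega> S \<noteq> 0"
  using assms[unfolded rayleigh_weight_def, THEN conjunct2, THEN conjunct1] by blast

lemma rayleigh_weight_ineq:
  assumes "finite E" "rayleigh_weight E \<omega>" "e \<in> E" "f \<in> E" "e \<noteq> f" "\<forall>x\<in>E. 0 < y x"
  shows "Zpoly E (deletion f (deletion e \<omega>)) y * Zpoly E (contraction e (contraction f \<omega>)) y
    \<le> Zpoly E (deletion f (contraction e \<omega>)) y * Zpoly E (deletion e (contraction f \<omega>)) y"
  using assms(2)[unfolded rayleigh_weight_def, THEN conjunct2, THEN conjunct2, rule_format,
      OF assms(3-5)] assms(6)
  unfolding rayleigh_difference_eq[OF assms(1,3-5)] by simp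

lemma rayleigh_weightI:
  assumes "finite E" "\<And>S. S \<subseteq> E \<Longrightarrow> 0 \<le> \<omega> S" "S\<^sub>0 \<subseteq> E" "\<omega> S\<^sub>0 \<noteq> 0"
    and ineq: "\<And>e f y. e \<in> E \<Longrightarrow> f \<in> E \<Longrightarrow> e \<noteq> f \<Longrightarrow> \<forall>x\<in>E. 0 < y x \<Longrightarrow>
      Zpoly E (deletion f (deletion e \<omega>)) y * Zpoly E (contraction e (contraction f \<omega>)) y
      \<le> Zpoly E (deletion f (contraction e \<omega>)) y * Zpoly E (deletion e (contraction f \<omega>)) y"
  shows "rayleigh_weight E \<omega>"
  unfolding rayleigh_weight_def
proof (intro conjI allI impI ballI)
  fix e f and y :: "'a \<Rightarrow> real"
  assume "e \<in> E" "f \<in> E" "e \<noteq> f" "\<forall>x\<in>E. 0 < y x"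
  with ineq[OF this]
  show "0 \<le> pd e (Zpoly E \<omega>) y * pd f (Zpoly E \<omega>) y - pd e (pd f (Zpoly E \<omega>)) y * Zpoly E \<omega> y"
    unfolding rayleigh_difference_eq[OF assms(1) \<open>e \<in> E\<close> \<open>f \<in> E\<close> \<open>e \<noteq> f\<close>] by simp
qed (use assms(2-4) in auto)

lemma rayleigh_weight_cong:
  assumes "rayleigh_weight E \<omega>" "\<And>S. S \<subseteq> E \<Longrightarrow> \<omega>' S = \<omega> S"
  shows "rayleigh_weight E \<omega>'"
proof -
  have "Zpoly E \<omega>' = Zpoly E \<omega>" using assms(2) by (intro ext Zpoly_cong) auto
  then show ?thesis using assms unfolding rayleigh_weight_def by auto
qed

section \<open>Homogeneous parts of top weighted degree\<close>

lemma powr_sum_top_coeff_nonneg: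
  fixes c k :: "'i \<Rightarrow> real"
  assumes "finite I"
    and deg: "\<And>i. i \<in> I \<Longrightarrow> c i \<noteq> 0 \<Longrightarrow> k i \<le> M"
    and nonneg: "\<And>t. 0 < t \<Longrightarrow> 0 \<le> (\<Sum>i\<in>I. c i * t powr k i)"
  shows "0 \<le> (\<Sum>i\<in>I. if k i = M then c i else 0)"
proof -
  have "((\<lambda>t. c i * t powr (k i - M)) \<longlongrightarrow> (if k i = M then c i else 0)) at_top" if "i \<in> I" for i
  proof (cases "c i = 0 \<or> k i = M")
    case True
    have "\<forall>\<^sub>F t in at_top. c i * t powr (k i - M) = (if k i = M then c i else 0)"
      using eventually_gt_at_top[of 0] by eventually_elim (use True in auto)
    then show ?thesis by (simp add: tendsto_eventually)
  next
    case False
    with deg that have "k i - M < 0" by fastforce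
    then have "((\<lambda>t. c i * t powr (k i - M)) \<longlongrightarrow> c i * 0) at_top"
      by (intro tendsto_mult tendsto_const tendsto_neg_powr filterlim_ident)
    with False show ?thesis by simp
  qed
  then have "((\<lambda>t. \<Sum>i\<in>I. c i * t powr (k i - M)) \<longlongrightarrow> (\<Sum>i\<in>I. if k i = M then c i else 0)) at_top"
    by (intro tendsto_sum)
  moreover have "\<forall>\<^sub>F t in at_top. 0 \<le> (\<Sum>i\<in>I. c i * t powr (k i - M))"
    using eventually_gt_at_top[of 0]
  proof eventually_elim
    case (elim t)
    have "(\<Sum>i\<in>I. c i * t powr (k i - M)) = (\<Sum>i\<in>I. c i * t powr k i) / t powr M"
      by (simp add: powr_diff sum_divide_distrib)
    with nonneg[OF elim] show ?case by simp
  qed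
  ultimately show ?thesis by (rule tendsto_lowerbound) simp
qed

lemma Zpoly_mult:
  "Zpoly E \<alpha> y * Zpoly E \<delta> y = (\<Sum>(U, V)\<in>Pow E \<times> Pow E. \<alpha> U * \<delta> V * (prod y U * prod y V))"
  unfolding Zpoly_def sum_product sum.cartesian_product
  by (rule sum.cong) (auto simp: algebra_simps)

text \<open>Substituting \<open>y\<^sub>x \<mapsto> t\<^bsup>w x\<^esup> y\<^sub>x\<close> and letting \<open>t \<rightarrow> \<infinity>\<close> isolates the
  terms of top \<open>w\<close>-degree \<open>M\<close> on both sides.\<close>

lemma top_degree_part_mult_le:
  fixes w :: "'a \<Rightarrow> real"
  assumes "finite E"
    and le: "\<And>y. \<forall>x\<in>E. 0 < y x \<Longrightarrow> Zpoly E \<alpha> y * Zpoly E \<delta> y \<le> Zpoly E \<beta> y * Zpoly E \<gamma> y"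
    and deg_\<alpha>\<delta>: "\<And>U V. U \<subseteq> E \<Longrightarrow> V \<subseteq> E \<Longrightarrow> \<alpha> U * \<delta> V \<noteq> 0 \<Longrightarrow> sum w U + sum w V \<le> M"
    and deg_\<beta>\<gamma>: "\<And>U V. U \<subseteq> E \<Longrightarrow> V \<subseteq> E \<Longrightarrow> \<beta> U * \<gamma> V \<noteq> 0 \<Longrightarrow> sum w U + sum w V \<le> M"
    and y: "\<forall>x\<in>E. 0 < y x"
  shows "(\<Sum>(U, V)\<in>Pow E \<times> Pow E.
            if sum w U + sum w V = M then \<alpha> U * \<delta> V * (prod y U * prod y V) else 0)
       \<le> (\<Sum>(U, V)\<in>Pow E \<times> Pow E.
            if sum w U + sum w V = M then \<beta> U * \<gamma> V * (prod y U * prod y V) else 0)"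
proof -
  define c where "c = (\<lambda>(U, V). (\<beta> U * \<gamma> V - \<alpha> U * \<delta> V) * (prod y U * prod y V))"
  define k where "k = (\<lambda>(U, V). sum w U + sum w V)"
  have "0 \<le> (\<Sum>i\<in>Pow E \<times> Pow E. if k i = M then c i else 0)"
  proof (rule powr_sum_top_coeff_nonneg)
    fix i assume "i \<in> Pow E \<times> Pow E" "c i \<noteq> 0"
    moreover obtain U V where i: "i = (U, V)" by force
    ultimately have "U \<subseteq> E" "V \<subseteq> E" "\<alpha> U * \<delta> V \<noteq> 0 \<or> \<beta> U * \<gamma> V \<noteq> 0"
      by (auto simp: c_def)
    with deg_\<alpha>\<delta> deg_\<beta>\<gamma> show "k i \<le> M" by (auto simp: k_def i)
  next
    fix t :: real assume t: "0 < t"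
    define y\<^sub>t where "y\<^sub>t = (\<lambda>x. t powr w x * y x)"
    have "prod y\<^sub>t U = t powr sum w U * prod y U" if "U \<subseteq> E" for U
      using t finite_subset[OF that \<open>finite E\<close>] by (simp add: y\<^sub>t_def prod.distrib powr_sum)
    then have "(\<Sum>i\<in>Pow E \<times> Pow E. c i * t powr k i)
        = Zpoly E \<beta> y\<^sub>t * Zpoly E \<gamma> y\<^sub>t - Zpoly E \<alpha> y\<^sub>t * Zpoly E \<delta> y\<^sub>t"
      unfolding Zpoly_mult sum_subtractf[symmetric]
      by (intro sum.cong) (auto simp: c_def k_def powr_add algebra_simps)
    also have "\<dots> \<ge> 0"
      using le[of y\<^sub>t] y t by (simp add: y\<^sub>t_def)
    finally show "0 \<le> (\<Sum>i\<in>Pow E \<times> Pow E. c i * t powr k i)" .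
  qed (use \<open>finite E\<close> in simp)
  also have "(\<Sum>i\<in>Pow E \<times> Pow E. if k i = M then c i else 0)
    = (\<Sum>(U, V)\<in>Pow E \<times> Pow E.
         if sum w U + sum w V = M then \<beta> U * \<gamma> V * (prod y U * prod y V) else 0)
    - (\<Sum>(U, V)\<in>Pow E \<times> Pow E.
         if sum w U + sum w V = M then \<alpha> U * \<delta> V * (prod y U * prod y V) else 0)"
    unfolding sum_subtractf[symmetric] by (intro sum.cong) (auto simp: c_def k_def algebra_simps)
  finally show ?thesis by simp
qed

definition homogeneous_part :: "('a \<Rightarrow> real) \<Rightarrow> real \<Rightarrow> ('a set \<Rightarrow> real) \<Rightarrow> 'a set \<Rightarrow> real" where
  "homogeneous_part w m \<omega> U = (if sum w U = m then \<omega> U else 0)"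

definition wdegree_le :: "'a set \<Rightarrow> ('a \<Rightarrow> real) \<Rightarrow> ('a set \<Rightarrow> real) \<Rightarrow> real \<Rightarrow> bool" where
  "wdegree_le E w \<omega> m \<longleftrightarrow> (\<forall>U\<subseteq>E. \<omega> U \<noteq> 0 \<longrightarrow> sum w U \<le> m)"

lemma wdegree_le_attained:
  assumes "finite E" "U \<subseteq> E" "\<omega> U \<noteq> 0"
  obtains U\<^sub>0 where "U\<^sub>0 \<subseteq> E" "\<omega> U\<^sub>0 \<noteq> 0" "wdegree_le E w \<omega> (sum w U\<^sub>0)"
proof -
  let ?A = "{U \<in> Pow E. \<omega> U \<noteq> 0}"
  have "finite ?A" "?A \<noteq> {}" using assms by auto
  then obtain U\<^sub>0 where "U\<^sub>0 \<in> ?A" "\<And>U. U \<in> ?A \<Longrightarrow> sum w U \<le> sum w U\<^sub>0"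
    using finite_obtains_max[where f = "sum w"] by blast
  then show ?thesis
    by (intro that[of U\<^sub>0]) (auto simp: wdegree_le_def)
qed

lemma wdegree_le_deletion: "wdegree_le E w \<omega> m \<Longrightarrow> wdegree_le E w (deletion e \<omega>) m"
  by (simp add: wdegree_le_def deletion_def)

lemma wdegree_le_contraction:
  assumes "finite E" "e \<in> E" "wdegree_le E w \<omega> m"
  shows "wdegree_le E w (contraction e \<omega>) (m - w e)"
  unfolding wdegree_le_def
proof (intro allI impI)
  fix U assume U: "U \<subseteq> E" "contraction e \<omega> U \<noteq> 0"
  then have "e \<notin> U" "\<omega> (insert e U) \<noteq> 0" by (auto simp: contraction_def split: if_splits)
  with U assms(2,3) have "sum w (insert e U) \<le> m" by (simp add: wdegree_le_def)
  with \<open>e \<notin> U\<close> finite_subset[OF U(1) assms(1)] show "sum w U \<le> m - w e" by simp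
qed

lemma Zpoly_minors_homogeneous_part:
  assumes "finite E" "e \<noteq> f"
  shows "Zpoly E (deletion f (deletion e (homogeneous_part w m \<omega>)))
      = Zpoly E (homogeneous_part w m (deletion f (deletion e \<omega>)))"
    and "Zpoly E (deletion f (contraction e (homogeneous_part w m \<omega>)))
      = Zpoly E (homogeneous_part w (m - w e) (deletion f (contraction e \<omega>)))"
    and "Zpoly E (deletion e (contraction f (homogeneous_part w m \<omega>)))
      = Zpoly E (homogeneous_part w (m - w f) (deletion e (contraction f \<omega>)))"
    and "Zpoly E (contraction e (contraction f (homogeneous_part w m \<omega>)))
      = Zpoly E (homogeneous_part w (m - w f - w e) (contraction e (contraction f \<omega>)))"
  using assms finite_subset[OF _ assms(1)]
  by (auto intro!: ext Zpoly_cong simp: deletion_def contraction_def homogeneous_part_def)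

lemma Zpoly_homogeneous_part_mult:
  assumes "wdegree_le E w \<alpha> a" "wdegree_le E w \<delta> d"
  shows "Zpoly E (homogeneous_part w a \<alpha>) y * Zpoly E (homogeneous_part w d \<delta>) y
    = (\<Sum>(U, V)\<in>Pow E \<times> Pow E.
         if sum w U + sum w V = a + d then \<alpha> U * \<delta> V * (prod y U * prod y V) else 0)"
  unfolding Zpoly_mult
proof (rule sum.cong[OF refl], clarify)
  fix U V assume "U \<subseteq> E" "V \<subseteq> E"
  with assms have "\<alpha> U * \<delta> V \<noteq> 0 \<Longrightarrow> sum w U \<le> a \<and> sum w V \<le> d"
    by (auto simp: wdegree_le_def)
  then show "homogeneous_part w a \<alpha> U * homogeneous_part w d \<delta> V * (prod y U * prod y V) =
      (if sum w U + sum w V = a + d then \<alpha> U * \<delta> V * (prod y U * prod y V) else 0)"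
    by (cases "\<alpha> U * \<delta> V = 0") (auto simp: homogeneous_part_def)
qed

lemma homogeneous_part_mult_le:
  assumes "finite E"
    and le: "\<And>y. \<forall>x\<in>E. 0 < y x \<Longrightarrow> Zpoly E \<alpha> y * Zpoly E \<delta> y \<le> Zpoly E \<beta> y * Zpoly E \<gamma> y"
    and deg: "wdegree_le E w \<alpha> a" "wdegree_le E w \<delta> d" "wdegree_le E w \<beta> b" "wdegree_le E w \<gamma> c"
    and "a + d = b + c" and y: "\<forall>x\<in>E. 0 < y x"
  shows "Zpoly E (homogeneous_part w a \<alpha>) y * Zpoly E (homogeneous_part w d \<delta>) y
       \<le> Zpoly E (homogeneous_part w b \<beta>) y * Zpoly E (homogeneous_part w c \<gamma>) y"
proof -
  have "sum w U + sum w V \<le> a + d" if "U \<subseteq> E" "V \<subseteq> E" "\<alpha> U * \<delta> V \<noteq> 0" for U V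
    using that deg(1,2) unfolding wdegree_le_def by (simp add: add_mono)
  moreover have "sum w U + sum w V \<le> a + d" if "U \<subseteq> E" "V \<subseteq> E" "\<beta> U * \<gamma> V \<noteq> 0" for U V
    using that deg(3,4) \<open>a + d = b + c\<close> unfolding wdegree_le_def by (simp add: add_mono)
  ultimately have "(\<Sum>(U, V)\<in>Pow E \<times> Pow E.
        if sum w U + sum w V = a + d then \<alpha> U * \<delta> V * (prod y U * prod y V) else 0)
      \<le> (\<Sum>(U, V)\<in>Pow E \<times> Pow E.
        if sum w U + sum w V = a + d then \<beta> U * \<gamma> V * (prod y U * prod y V) else 0)"
    by (intro top_degree_part_mult_le[OF \<open>finite E\<close> le _ _ y])
  then show ?thesis
    unfolding Zpoly_homogeneous_part_mult[OF deg(1,2)] Zpoly_homogeneous_part_mult[OF deg(3,4)]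
      \<open>a + d = b + c\<close>[symmetric] .
qed

lemma rayleigh_weight_homogeneous_part:
  assumes fin: "finite E" and "rayleigh_weight E \<omega>" and deg: "wdegree_le E w \<omega> m"
    and "U\<^sub>0 \<subseteq> E" "\<omega> U\<^sub>0 \<noteq> 0" "sum w U\<^sub>0 = m"
  shows "rayleigh_weight E (homogeneous_part w m \<omega>)"
proof (rule rayleigh_weightI[OF fin _ assms(4)])
  show "0 \<le> homogeneous_part w m \<omega> S" if "S \<subseteq> E" for S
    using rayleigh_weight_nonneg[OF \<open>rayleigh_weight E \<omega>\<close> that] by (simp add: homogeneous_part_def)
  show "homogeneous_part w m \<omega> U\<^sub>0 \<noteq> 0" using assms(5,6) by (simp add: homogeneous_part_def)
next
  fix e f and y :: "'a \<Rightarrow> real"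
  assume ef: "e \<in> E" "f \<in> E" "e \<noteq> f" and y: "\<forall>x\<in>E. 0 < y x"
  have "wdegree_le E w (deletion f (deletion e \<omega>)) m"
    and "wdegree_le E w (contraction e (contraction f \<omega>)) (m - w f - w e)"
    and "wdegree_le E w (deletion f (contraction e \<omega>)) (m - w e)"
    and "wdegree_le E w (deletion e (contraction f \<omega>)) (m - w f)"
    using deg ef by (simp_all add: wdegree_le_deletion wdegree_le_contraction fin)
  from homogeneous_part_mult_le[OF fin rayleigh_weight_ineq[OF fin \<open>rayleigh_weight E \<omega>\<close> ef]
      this _ y]
  show "Zpoly E (deletion f (deletion e (homogeneous_part w m \<omega>))) y *
        Zpoly E (contraction e (contraction f (homogeneous_part w m \<omega>))) y
      \<le> Zpoly E (deletion f (contraction e (homogeneous_part w m \<omega>))) y *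
        Zpoly E (deletion e (contraction f (homogeneous_part w m \<omega>))) y"
    by (simp add: Zpoly_minors_homogeneous_part[OF fin \<open>e \<noteq> f\<close>])
qed

section \<open>The tropical Rayleigh inequality\<close>

text \<open>The max-plus shadow of \<open>Z\<^sub>e Z\<^sub>f \<ge> Z Z\<^sub>e\<^sub>f\<close>: in every weighting \<open>w\<close>, a pair
  of terms on the right (\<open>S\<close> avoiding \<open>e, f\<close>, \<open>T\<close> containing both) is outweighed by a pair
  on the left.\<close>

definition tropically_rayleigh :: "'a set set \<Rightarrow> bool" where
  "tropically_rayleigh Q \<longleftrightarrow> (\<forall>(w :: 'a \<Rightarrow> real) e f S T. e \<noteq> f \<longrightarrow> S \<in> Q \<longrightarrow> T \<in> Q \<longrightarrow>
     e \<notin> S \<longrightarrow> f \<notin> S \<longrightarrow> e \<in> T \<longrightarrow> f \<in> T \<longrightarrow>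
     (\<exists>U\<^sub>1\<in>Q. \<exists>U\<^sub>2\<in>Q. e \<in> U\<^sub>1 \<and> f \<notin> U\<^sub>1 \<and> f \<in> U\<^sub>2 \<and> e \<notin> U\<^sub>2 \<and>
        sum w S + sum w T \<le> sum w U\<^sub>1 + sum w U\<^sub>2))"

lemma tropical_mult_le:
  fixes w :: "'a \<Rightarrow> real"
  assumes fin: "finite E"
    and le: "\<And>y. \<forall>x\<in>E. 0 < y x \<Longrightarrow> Zpoly E \<alpha> y * Zpoly E \<delta> y \<le> Zpoly E \<beta> y * Zpoly E \<gamma> y"
    and nonneg: "\<And>U V. U \<subseteq> E \<Longrightarrow> V \<subseteq> E \<Longrightarrow> 0 \<le> \<alpha> U * \<delta> V"
    and "S \<subseteq> E" "T \<subseteq> E" "\<alpha> S * \<delta> T \<noteq> 0"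
  obtains U V where "U \<subseteq> E" "V \<subseteq> E" "\<beta> U * \<gamma> V \<noteq> 0" "sum w S + sum w T \<le> sum w U + sum w V"
proof -
  have "\<exists>U V. U \<subseteq> E \<and> V \<subseteq> E \<and> \<beta> U * \<gamma> V \<noteq> 0 \<and> sum w S + sum w T \<le> sum w U + sum w V"
  proof (rule ccontr)
    assume no_witness: "\<not> ?thesis"
    obtain U\<^sub>0 where U\<^sub>0: "U\<^sub>0 \<subseteq> E" "\<alpha> U\<^sub>0 \<noteq> 0" "wdegree_le E w \<alpha> (sum w U\<^sub>0)"
      using wdegree_le_attained[where \<omega> = \<alpha>, OF fin \<open>S \<subseteq> E\<close>] \<open>\<alpha> S * \<delta> T \<noteq> 0\<close> by auto
    obtain V\<^sub>0 where V\<^sub>0: "V\<^sub>0 \<subseteq> E" "\<delta> V\<^sub>0 \<noteq> 0" "wdegree_le E w \<delta> (sum w V\<^sub>0)"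
      using wdegree_le_attained[where \<omega> = \<delta>, OF fin \<open>T \<subseteq> E\<close>] \<open>\<alpha> S * \<delta> T \<noteq> 0\<close> by auto
    define M where "M = sum w U\<^sub>0 + sum w V\<^sub>0"
    have \<alpha>\<delta>_le: "sum w U + sum w V \<le> M" if "U \<subseteq> E" "V \<subseteq> E" "\<alpha> U * \<delta> V \<noteq> 0" for U V
      using that U\<^sub>0(3) V\<^sub>0(3) unfolding M_def wdegree_le_def by (simp add: add_mono)
    have \<beta>\<gamma>_less: "sum w U + sum w V < M" if "U \<subseteq> E" "V \<subseteq> E" "\<beta> U * \<gamma> V \<noteq> 0" for U V
    proof -
      have "sum w U + sum w V < sum w S + sum w T" using no_witness that by (meson not_le)
      also have "\<dots> \<le> M" using \<alpha>\<delta>_le[OF \<open>S \<subseteq> E\<close> \<open>T \<subseteq> E\<close> \<open>\<alpha> S * \<delta> T \<noteq> 0\<close>] .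
      finally show ?thesis .
    qed
    have "0 < (\<Sum>(U, V)\<in>Pow E \<times> Pow E. if sum w U + sum w V = M then \<alpha> U * \<delta> V else 0)"
    proof (rule sum_pos2[where i = "(U\<^sub>0, V\<^sub>0)"])
      show "0 < (case (U\<^sub>0, V\<^sub>0) of (U, V) \<Rightarrow> if sum w U + sum w V = M then \<alpha> U * \<delta> V else 0)"
        using nonneg[OF U\<^sub>0(1) V\<^sub>0(1)] U\<^sub>0(2) V\<^sub>0(2) by (simp add: M_def less_le)
    next
      show "0 \<le> (case p of (U, V) \<Rightarrow> if sum w U + sum w V = M then \<alpha> U * \<delta> V else 0)"
        if "p \<in> Pow E \<times> Pow E" for p
        using that nonneg[of "fst p" "snd p"] by (auto simp: case_prod_unfold)
    qed (use fin U\<^sub>0 V\<^sub>0 in simp_all)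
    also have "\<dots> \<le> (\<Sum>(U, V)\<in>Pow E \<times> Pow E. if sum w U + sum w V = M then \<beta> U * \<gamma> V else 0)"
      using top_degree_part_mult_le[OF fin le \<alpha>\<delta>_le less_imp_le[OF \<beta>\<gamma>_less], where y = "\<lambda>_. 1"]
      by (simp add: case_prod_unfold cong: if_cong)
    also have "\<dots> = 0"
    proof (intro sum.neutral ballI)
      fix p assume "p \<in> Pow E \<times> Pow E"
      then show "(case p of (U, V) \<Rightarrow> if sum w U + sum w V = M then \<beta> U * \<gamma> V else 0) = 0"
        using \<beta>\<gamma>_less[of "fst p" "snd p"]
        by (cases "\<beta> (fst p) * \<gamma> (snd p) = 0") (auto simp: case_prod_unfold)
    qed
    finally show False by simp
  qed
  with that show ?thesis by blast
qed

lemma rayleigh_weight_tropically_rayleigh: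
  assumes fin: "finite E" and "rayleigh_weight E \<omega>"
  shows "tropically_rayleigh {S. S \<subseteq> E \<and> 0 < \<omega> S}"
  unfolding tropically_rayleigh_def
proof (intro allI impI)
  let ?Q = "{S. S \<subseteq> E \<and> 0 < \<omega> S}"
  fix w :: "'a \<Rightarrow> real" and e f S T
  assume "e \<noteq> f" "S \<in> ?Q" "T \<in> ?Q" "e \<notin> S" "f \<notin> S" "e \<in> T" "f \<in> T"
  then have "e \<in> E" "f \<in> E" "S \<subseteq> E" by auto
  note nonneg = rayleigh_weight_nonneg[OF \<open>rayleigh_weight E \<omega>\<close>]
  define T' where "T' = T - {e, f}"
  have T: "T = insert e (insert f T')" "e \<notin> T'" "f \<notin> T'" "T' \<subseteq> E"
    using \<open>e \<in> T\<close> \<open>f \<in> T\<close> \<open>T \<in> ?Q\<close> by (auto simp: T'_def)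
  have "deletion f (deletion e \<omega>) S * contraction e (contraction f \<omega>) T' \<noteq> 0"
    using \<open>S \<in> ?Q\<close> \<open>T \<in> ?Q\<close> \<open>e \<notin> S\<close> \<open>f \<notin> S\<close> \<open>e \<noteq> f\<close> T
    by (auto simp: deletion_def contraction_def insert_commute)
  moreover have "0 \<le> deletion f (deletion e \<omega>) U * contraction e (contraction f \<omega>) V"
    if "U \<subseteq> E" "V \<subseteq> E" for U V
    using that nonneg \<open>e \<in> E\<close> \<open>f \<in> E\<close> by (simp add: deletion_def contraction_def)
  ultimately obtain U V where "U \<subseteq> E" "V \<subseteq> E"
    and \<beta>\<gamma>: "deletion f (contraction e \<omega>) U * deletion e (contraction f \<omega>) V \<noteq> 0"
    and ineq: "sum w S + sum w T' \<le> sum w U + sum w V"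
    using tropical_mult_le[OF fin
        rayleigh_weight_ineq[OF fin \<open>rayleigh_weight E \<omega>\<close> \<open>e \<in> E\<close> \<open>f \<in> E\<close> \<open>e \<noteq> f\<close>]
        _ \<open>S \<subseteq> E\<close> \<open>T' \<subseteq> E\<close>, where w = w]
    by blast
  from \<beta>\<gamma> have U: "e \<notin> U" "f \<notin> U" "\<omega> (insert e U) \<noteq> 0" and V: "e \<notin> V" "f \<notin> V" "\<omega> (insert f V) \<noteq> 0"
    by (auto simp: deletion_def contraction_def split: if_splits)
  have "insert e U \<in> ?Q" "insert f V \<in> ?Q"
    using U(3) V(3) nonneg[of "insert e U"] nonneg[of "insert f V"] \<open>U \<subseteq> E\<close> \<open>V \<subseteq> E\<close> \<open>e \<in> E\<close> \<open>f \<in> E\<close>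
    by (auto simp: less_le)
  have "finite U" "finite V" "finite T'"
    using \<open>U \<subseteq> E\<close> \<open>V \<subseteq> E\<close> \<open>T' \<subseteq> E\<close> by (simp_all add: finite_subset[OF _ fin])
  with ineq U V T \<open>e \<noteq> f\<close> have "sum w S + sum w T \<le> sum w (insert e U) + sum w (insert f V)"
    by simp
  with \<open>insert e U \<in> ?Q\<close> \<open>insert f V \<in> ?Q\<close> U V \<open>e \<noteq> f\<close>
  show "\<exists>U\<^sub>1\<in>?Q. \<exists>U\<^sub>2\<in>?Q. e \<in> U\<^sub>1 \<and> f \<notin> U\<^sub>1 \<and> f \<in> U\<^sub>2 \<and> e \<notin> U\<^sub>2 \<and>
      sum w S + sum w T \<le> sum w U\<^sub>1 + sum w U\<^sub>2"
    by (intro bexI[of _ "insert e U"] bexI[of _ "insert f V"]) auto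
qed

section \<open>Matroids from basis families\<close>

lemma exchange_max_overlap:
  assumes exchange: "\<And>S T e. S \<in> \<B> \<Longrightarrow> T \<in> \<B> \<Longrightarrow> e \<in> S - T \<Longrightarrow> \<exists>g\<in>T - S. insert g (S - {e}) \<in> \<B>"
    and "S \<in> \<B>" "T \<in> \<B>" "finite S" "B \<subseteq> T"
    and max: "\<And>T'. T' \<in> \<B> \<Longrightarrow> B \<subseteq> T' \<Longrightarrow> card (S \<inter> T') \<le> card (S \<inter> T)"
  shows "T \<subseteq> B \<union> S"
proof
  fix x assume "x \<in> T"
  show "x \<in> B \<union> S"
  proof (rule ccontr)
    assume "x \<notin> B \<union> S"
    with exchange[OF \<open>T \<in> \<B>\<close> \<open>S \<in> \<B>\<close>] \<open>x \<in> T\<close> obtain g where g: "g \<in> S - T" "insert g (T - {x}) \<in> \<B>"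
      by blast
    have "S \<inter> insert g (T - {x}) = insert g (S \<inter> T)" using g \<open>x \<notin> B \<union> S\<close> by auto
    with g \<open>finite S\<close> have "card (S \<inter> insert g (T - {x})) = card (S \<inter> T) + 1" by simp
    moreover have "B \<subseteq> insert g (T - {x})" using \<open>B \<subseteq> T\<close> \<open>x \<notin> B \<union> S\<close> by auto
    ultimately show False using max[OF g(2)] by simp
  qed
qed

lemma bases_augment:
  assumes "finite E" "\<B> \<subseteq> Pow E"
    and equicard: "\<And>X Y. X \<in> \<B> \<Longrightarrow> Y \<in> \<B> \<Longrightarrow> card X = card Y"
    and exchange: "\<And>S T e. S \<in> \<B> \<Longrightarrow> T \<in> \<B> \<Longrightarrow> e \<in> S - T \<Longrightarrow> \<exists>g\<in>T - S. insert g (S - {e}) \<in> \<B>"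
    and "A \<subseteq> S\<^sub>0" "S\<^sub>0 \<in> \<B>" "B \<subseteq> T\<^sub>0" "T\<^sub>0 \<in> \<B>" and "card A < card B"
  shows "\<exists>x\<in>B - A. \<exists>C\<in>\<B>. insert x A \<subseteq> C"
proof (rule ccontr)
  assume no_augmentation: "\<not> ?thesis"
  have fin: "finite X" if "X \<in> \<B>" for X
    using that assms(1,2) finite_subset by blast
  define P where "P = {(S, T). S \<in> \<B> \<and> T \<in> \<B> \<and> A \<subseteq> S \<and> B \<subseteq> T}"
  have "finite P" using assms(1,2) by (intro finite_subset[of P "Pow E \<times> Pow E"]) (auto simp: P_def)
  moreover have "P \<noteq> {}" using assms(5-8) by (auto simp: P_def)
  ultimately obtain p where "p \<in> P"
    and p_max: "\<And>q. q \<in> P \<Longrightarrow> card (fst q \<inter> snd q) \<le> card (fst p \<inter> snd p)"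
    using finite_obtains_max[where f = "\<lambda>q. card (fst q \<inter> snd q)"] by blast
  obtain S T where p: "p = (S, T)" by force
  with \<open>p \<in> P\<close> have ST: "S \<in> \<B>" "T \<in> \<B>" "A \<subseteq> S" "B \<subseteq> T" by (simp_all add: P_def)
  have max: "card (S' \<inter> T') \<le> card (S \<inter> T)" if "S' \<in> \<B>" "T' \<in> \<B>" "A \<subseteq> S'" "B \<subseteq> T'" for S' T'
    using p_max[of "(S', T')"] that by (simp add: P_def p)
  have "T \<subseteq> B \<union> S"
    using ST fin max by (intro exchange_max_overlap[OF exchange]) auto
  moreover have "S \<subseteq> A \<union> T"
    using ST fin max by (intro exchange_max_overlap[OF exchange]) (auto simp: Int_commute)
  moreover have "B \<inter> S \<subseteq> A"
    using no_augmentation ST by blast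
  ultimately have "T - S = B - S" "S - T \<subseteq> A - B" "B - A \<subseteq> B - S"
    using ST by blast+
  have "finite A" "finite B" using ST fin finite_subset by blast+
  have "card (T - S) = card (S - T)"
    using card_Int_Diff[OF fin[OF ST(1)], of T] card_Int_Diff[OF fin[OF ST(2)], of S]
      equicard[OF ST(1,2)]
    by (simp add: Int_commute)
  also have "\<dots> \<le> card (A - B)"
    using \<open>S - T \<subseteq> A - B\<close> \<open>finite A\<close> by (intro card_mono) auto
  also have "\<dots> < card (B - A)"
    using card_Int_Diff[of A B] card_Int_Diff[of B A] \<open>card A < card B\<close> \<open>finite A\<close> \<open>finite B\<close>
    by (simp add: Int_commute)
  also have "\<dots> \<le> card (T - S)"
    using \<open>B - A \<subseteq> B - S\<close> \<open>T - S = B - S\<close> \<open>finite B\<close> by (intro card_mono) auto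
  finally show False by simp
qed

lemma matroid_of_bases:
  assumes "finite E" "\<B> \<subseteq> Pow E" "\<B> \<noteq> {}"
    and equicard: "\<And>X Y. X \<in> \<B> \<Longrightarrow> Y \<in> \<B> \<Longrightarrow> card X = card Y"
    and exchange: "\<And>S T e. S \<in> \<B> \<Longrightarrow> T \<in> \<B> \<Longrightarrow> e \<in> S - T \<Longrightarrow> \<exists>g\<in>T - S. insert g (S - {e}) \<in> \<B>"
  shows "matroid E {I. \<exists>B\<in>\<B>. I \<subseteq> B}" and "bases {I. \<exists>B\<in>\<B>. I \<subseteq> B} = \<B>"
proof -
  let ?M = "{I. \<exists>B\<in>\<B>. I \<subseteq> B}"
  show "matroid E ?M"
    unfolding matroid_def
  proof (intro conjI ballI allI impI)
    show "finite E" by fact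
    show "?M \<subseteq> Pow E" "{} \<in> ?M" using assms(2,3) by auto
  next
    fix A B assume "A \<in> ?M" "B \<subseteq> A"
    then show "B \<in> ?M" by auto
  next
    fix A B assume "A \<in> ?M" "B \<in> ?M" "card A < card B"
    then obtain S T where "A \<subseteq> S" "S \<in> \<B>" "B \<subseteq> T" "T \<in> \<B>" by auto
    from bases_augment[OF assms(1,2) equicard exchange this \<open>card A < card B\<close>]
    show "\<exists>x\<in>B - A. insert x A \<in> ?M" by blast
  qed
  have "X = B" if "X \<in> \<B>" "B \<in> \<B>" "X \<subseteq> B" for X B
  proof -
    have "finite B" using that(2) assms(1,2) finite_subset by blast
    with that equicard show ?thesis by (metis card_subset_eq)
  qed
  then show "bases ?M = \<B>"
    unfolding bases_def by blast
qed

section \<open>Tropically Rayleigh families\<close>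

definition interval_weight :: "'a set \<Rightarrow> 'a set \<Rightarrow> 'a \<Rightarrow> real" where
  "interval_weight S T x = of_bool (x \<in> S \<inter> T) - of_bool (x \<notin> S \<union> T)"

lemma sum_interval_weight:
  assumes "finite U"
  shows "sum (interval_weight S T) U = real (card (U \<inter> (S \<inter> T))) - real (card (U - (S \<union> T)))"
proof -
  have "U \<inter> {x. x \<notin> S \<union> T} = U - (S \<union> T)" by blast
  with assms show ?thesis
    unfolding interval_weight_def sum_subtractf by (simp only: sum_of_bool_eq Collect_mem_eq)
qed

lemma sum_interval_weight_eq:
  assumes "finite U" "S \<inter> T \<subseteq> U" "U \<subseteq> S \<union> T"
  shows "sum (interval_weight S T) U = card (S \<inter> T)"
  using assms by (simp add: sum_interval_weight Int_absorb1)

lemma sum_interval_weight_le: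
  assumes "finite U" "finite (S \<inter> T)" "\<not> (S \<inter> T \<subseteq> U \<and> U \<subseteq> S \<union> T)"
  shows "sum (interval_weight S T) U \<le> real (card (S \<inter> T)) - 1"
proof -
  have "card (U \<inter> (S \<inter> T)) \<le> card (S \<inter> T)" using assms(2) by (intro card_mono) auto
  moreover have "card (U \<inter> (S \<inter> T)) < card (S \<inter> T) \<or> 0 < card (U - (S \<union> T))"
  proof (cases "S \<inter> T \<subseteq> U")
    case True
    with assms(3) have "U - (S \<union> T) \<noteq> {}" by blast
    with assms(1) show ?thesis by auto
  next
    case False
    then have "U \<inter> (S \<inter> T) \<subset> S \<inter> T" by blast
    with assms(2) show ?thesis by (simp add: psubset_card_mono)
  qed
  ultimately show ?thesis using assms(1) by (auto simp: sum_interval_weight)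
qed

locale tropically_rayleigh_family =
  fixes E :: "'a set" and Q :: "'a set set"
  assumes finite_ground: "finite E"
    and family_subset: "Q \<subseteq> Pow E"
    and tropical: "tropically_rayleigh Q"
begin

lemma finite_member: "U \<in> Q \<Longrightarrow> finite U"
  using family_subset finite_ground finite_subset by blast

lemma tropical_exchange:
  fixes w :: "'a \<Rightarrow> real"
  assumes "S \<in> Q" "T \<in> Q" "e \<noteq> f" "e \<in> T - S" "f \<in> T - S"
  obtains U\<^sub>1 U\<^sub>2 where "U\<^sub>1 \<in> Q" "U\<^sub>2 \<in> Q" "e \<in> U\<^sub>1" "f \<notin> U\<^sub>1" "f \<in> U\<^sub>2" "e \<notin> U\<^sub>2"
    "sum w S + sum w T \<le> sum w U\<^sub>1 + sum w U\<^sub>2"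
  using tropical assms unfolding tropically_rayleigh_def by blast

lemma separating_member:
  assumes "S \<in> Q" "T \<in> Q" "e \<noteq> f" "e \<in> T - S" "f \<in> T - S"
  obtains U where "U \<in> Q" "S \<inter> T \<subseteq> U" "U \<subseteq> S \<union> T" "e \<in> U" "f \<notin> U"
proof -
  let ?v = "interval_weight S T" and ?i = "real (card (S \<inter> T))"
  obtain U\<^sub>1 U\<^sub>2 where U: "U\<^sub>1 \<in> Q" "U\<^sub>2 \<in> Q" "e \<in> U\<^sub>1" "f \<notin> U\<^sub>1"
    and ineq: "sum ?v S + sum ?v T \<le> sum ?v U\<^sub>1 + sum ?v U\<^sub>2"
    using tropical_exchange[OF assms] by blast
  have fin: "finite (S \<inter> T)" using finite_member[OF assms(1)] by simp
  have le: "sum ?v U \<le> ?i" if "U \<in> Q" for U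
    using sum_interval_weight_eq[OF finite_member[OF that]]
      sum_interval_weight_le[OF finite_member[OF that] fin]
    by (cases "S \<inter> T \<subseteq> U \<and> U \<subseteq> S \<union> T") auto
  have "sum ?v S = ?i" "sum ?v T = ?i"
    using sum_interval_weight_eq finite_member assms(1,2) by auto
  with ineq le[OF U(2)] have "\<not> sum ?v U\<^sub>1 \<le> ?i - 1" by linarith
  with sum_interval_weight_le[OF finite_member[OF U(1)] fin] have "S \<inter> T \<subseteq> U\<^sub>1 \<and> U\<^sub>1 \<subseteq> S \<union> T"
    by blast
  with U that show ?thesis by blast
qed

lemma insert_member_between:
  assumes "S \<in> Q" "T \<in> Q" "S \<subseteq> T" "e \<in> T - S"
  shows "insert e S \<in> Q"
  using assms(2-4)
proof (induction "card (T - S)" arbitrary: T rule: less_induct)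
  case less
  show ?case
  proof (cases "T - S = {e}")
    case True
    with less.prems have "T = insert e S" by blast
    with less.prems show ?thesis by simp
  next
    case False
    with less.prems obtain f where f: "f \<in> T - S" "f \<noteq> e" by blast
    with less.prems obtain U where U: "U \<in> Q" "S \<subseteq> U" "U \<subseteq> T" "e \<in> U" "f \<notin> U"
      using separating_member[OF assms(1) less.prems(1), of e f] by (metis Int_absorb2 Un_absorb1)
    have "card (U - S) < card (T - S)"
      using U f finite_member[OF less.prems(1)] by (intro psubset_card_mono) auto
    with U less.prems show ?thesis by (intro less.hyps) auto
  qed
qed

lemma member_between:
  assumes "S \<in> Q" "T \<in> Q" "S \<subseteq> R" "R \<subseteq> T"
  shows "R \<in> Q"
  using assms(1,3)
proof (induction "card (R - S)" arbitrary: S rule: less_induct)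
  case less
  show ?case
  proof (cases "R = S")
    case True
    with less.prems show ?thesis by simp
  next
    case False
    with less.prems obtain e where e: "e \<in> R - S" by blast
    have "card (R - insert e S) < card (R - S)"
      using e finite_subset[OF assms(4) finite_member[OF assms(2)]]
      by (intro psubset_card_mono) auto
    moreover from e less.prems assms(2,4) have "insert e S \<in> Q"
      by (intro insert_member_between[of S T]) auto
    moreover from e less.prems have "insert e S \<subseteq> R" by blast
    ultimately show ?thesis using less.hyps by blast
  qed
qed

lemma card_le_by_interval_members:
  assumes "S \<in> Q" "T \<in> Q" "\<not> S \<subseteq> T"
    and smaller: "\<And>U. U \<in> Q \<Longrightarrow> S \<inter> T \<subseteq> U \<Longrightarrow> U \<subseteq> S \<union> T \<Longrightarrow> U - S \<subset> T - S \<Longrightarrow> card U \<le> card S"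
  shows "card T \<le> card S"
proof (rule ccontr)
  assume "\<not> card T \<le> card S"
  define n where "n = card (T - S)"
  have fin: "finite S" "finite T" using finite_member assms(1,2) by auto
  have "card S = card (S \<inter> T) + card (S - T)" "card T = card (S \<inter> T) + n"
    using card_Int_Diff[OF fin(1), of T] card_Int_Diff[OF fin(2), of S]
    by (auto simp: n_def Int_commute)
  moreover have "card (S - T) > 0" using fin \<open>\<not> S \<subseteq> T\<close> by auto
  ultimately have "\<not> card (T - S) \<le> Suc 0" using \<open>\<not> card T \<le> card S\<close> by (simp add: n_def)
  then obtain e f where ef: "e \<in> T - S" "f \<in> T - S" "e \<noteq> f"
    using card_le_Suc0_iff_eq[of "T - S"] fin(2) by blast
  (* The interval weight pushes the witnesses of the exchange inequality into the interval
     [S \<inter> T, S \<union> T], where their size is bounded by the hypothesis smaller. *)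
  define w where "w x = of_bool (x \<in> S \<union> T) + real n * interval_weight S T x" for x
  have sum_w: "sum w U = card (U \<inter> (S \<union> T)) + real n * sum (interval_weight S T) U"
    if "finite U" for U
    using that unfolding w_def sum.distrib sum_distrib_left[symmetric]
    by (simp only: sum_of_bool_eq Collect_mem_eq)
  have bound: "sum w U \<le> card S + real n * card (S \<inter> T)" if "U \<in> Q" "g \<in> T - S" "g \<notin> U" for U g
  proof (cases "S \<inter> T \<subseteq> U \<and> U \<subseteq> S \<union> T")
    case True
    with that have "card U \<le> card S" by (intro smaller) auto
    moreover have "U \<inter> (S \<union> T) = U" using True by blast
    ultimately show ?thesis
      using True sum_w sum_interval_weight_eq[of U S T] finite_member[OF \<open>U \<in> Q\<close>] by simp
  next
    case False
    have finU: "finite U" using finite_member[OF \<open>U \<in> Q\<close>] .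
    have "card (U \<inter> (S \<union> T)) \<le> card (S \<union> T)" using fin by (intro card_mono) auto
    also have "card (S \<union> T) = card S + n"
      using card_Un_disjoint[of S "T - S"] fin by (simp add: n_def)
    finally have "real (card (U \<inter> (S \<union> T))) \<le> real (card S) + real n" by simp
    moreover have "real n * sum (interval_weight S T) U \<le> real n * (real (card (S \<inter> T)) - 1)"
      using False sum_interval_weight_le[OF finU] fin by (intro mult_left_mono) simp_all
    ultimately show ?thesis
      using sum_w[OF finU] unfolding right_diff_distrib mult_1_right by linarith
  qed
  obtain U\<^sub>1 U\<^sub>2 where U: "U\<^sub>1 \<in> Q" "U\<^sub>2 \<in> Q" "e \<in> U\<^sub>1" "f \<notin> U\<^sub>1" "f \<in> U\<^sub>2" "e \<notin> U\<^sub>2"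
    and "sum w S + sum w T \<le> sum w U\<^sub>1 + sum w U\<^sub>2"
    using tropical_exchange[OF assms(1,2) ef(3,1,2)] by blast
  moreover have "sum w S = card S + real n * card (S \<inter> T)"
    using sum_w[OF fin(1)] sum_interval_weight_eq[OF fin(1), of S T] by simp
  moreover have "sum w T = card T + real n * card (S \<inter> T)"
    using sum_w[OF fin(2)] sum_interval_weight_eq[OF fin(2), of S T] by simp
  ultimately have "real (card T) \<le> real (card S)"
    using bound[OF U(1) ef(2) U(4)] bound[OF U(2) ef(1) U(6)] by linarith
  with \<open>\<not> card T \<le> card S\<close> show False by simp
qed

lemma card_le_maximal_member:
  assumes "S \<in> Q" and maximal: "\<And>U. U \<in> Q \<Longrightarrow> S \<subseteq> U \<Longrightarrow> U = S" and "T \<in> Q"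
  shows "card T \<le> card S"
  using \<open>T \<in> Q\<close>
proof (induction "card (T - S)" arbitrary: T rule: less_induct)
  case less
  show ?case
  proof (cases "S \<subseteq> T")
    case True
    with maximal less.prems have "T = S" by blast
    then show ?thesis by simp
  next
    case False
    show ?thesis
    proof (rule card_le_by_interval_members[OF \<open>S \<in> Q\<close> less.prems False])
      fix U assume "U \<in> Q" "U - S \<subset> T - S"
      moreover from this have "card (U - S) < card (T - S)"
        using finite_member[OF less.prems] by (intro psubset_card_mono) auto
      ultimately show "card U \<le> card S" using less.hyps by blast
    qed
  qed
qed

lemma complement_family: "tropically_rayleigh_family E ((-) E ` Q)"
proof
  show "finite E" "(-) E ` Q \<subseteq> Pow E" by (auto simp: finite_ground)
  show "tropically_rayleigh ((-) E ` Q)"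
    unfolding tropically_rayleigh_def
  proof (intro allI impI)
    fix w :: "'a \<Rightarrow> real" and e f S' T'
    assume "e \<noteq> f" "S' \<in> (-) E ` Q" "T' \<in> (-) E ` Q" "e \<notin> S'" "f \<notin> S'" "e \<in> T'" "f \<in> T'"
    then obtain S T where S: "S \<in> Q" "S' = E - S" and T: "T \<in> Q" "T' = E - T" by blast
    with \<open>e \<in> T'\<close> \<open>f \<in> T'\<close> \<open>e \<notin> S'\<close> \<open>f \<notin> S'\<close> have "e \<in> S - T" "f \<in> S - T" by auto
    then obtain U\<^sub>1 U\<^sub>2 where U: "U\<^sub>1 \<in> Q" "U\<^sub>2 \<in> Q" "e \<in> U\<^sub>1" "f \<notin> U\<^sub>1" "f \<in> U\<^sub>2" "e \<notin> U\<^sub>2"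
      and ineq: "sum (\<lambda>x. - w x) T + sum (\<lambda>x. - w x) S \<le> sum (\<lambda>x. - w x) U\<^sub>1 + sum (\<lambda>x. - w x) U\<^sub>2"
      using tropical_exchange[OF T(1) S(1) \<open>e \<noteq> f\<close>] by blast
    have sum_compl: "sum w (E - X) = sum w E - sum w X" if "X \<in> Q" for X
      using that family_subset finite_ground by (intro sum_diff) auto
    from ineq have "sum w S' + sum w T' \<le> sum w (E - U\<^sub>2) + sum w (E - U\<^sub>1)"
      unfolding S(2) T(2) sum_compl[OF S(1)] sum_compl[OF T(1)]
        sum_compl[OF U(1)] sum_compl[OF U(2)]
      by (simp add: sum_negf)
    moreover have "e \<in> E - U\<^sub>2" "f \<notin> E - U\<^sub>2" "f \<in> E - U\<^sub>1" "e \<notin> E - U\<^sub>1"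
      using U \<open>e \<in> T'\<close> \<open>f \<in> T'\<close> T by auto
    moreover have "E - U\<^sub>2 \<in> (-) E ` Q" "E - U\<^sub>1 \<in> (-) E ` Q" using U(1,2) by auto
    ultimately show "\<exists>U\<^sub>1\<in>(-) E ` Q. \<exists>U\<^sub>2\<in>(-) E ` Q. e \<in> U\<^sub>1 \<and> f \<notin> U\<^sub>1 \<and> f \<in> U\<^sub>2 \<and> e \<notin> U\<^sub>2 \<and>
        sum w S' + sum w T' \<le> sum w U\<^sub>1 + sum w U\<^sub>2"
      by (intro bexI[of _ "E - U\<^sub>2"] bexI[of _ "E - U\<^sub>1"] conjI)
  qed
qed

lemma card_ge_minimal_member:
  assumes "S \<in> Q" and minimal: "\<And>U. U \<in> Q \<Longrightarrow> U \<subseteq> S \<Longrightarrow> U = S" and "T \<in> Q"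
  shows "card S \<le> card T"
proof -
  interpret complement: tropically_rayleigh_family E "(-) E ` Q" by (rule complement_family)
  have sub: "X \<subseteq> E" if "X \<in> Q" for X using that family_subset by auto
  have "card (E - T) \<le> card (E - S)"
  proof (rule complement.card_le_maximal_member)
    fix V assume "V \<in> (-) E ` Q" "E - S \<subseteq> V"
    then obtain U where "U \<in> Q" "V = E - U" "U \<subseteq> S" using sub by blast
    with minimal show "V = E - S" by blast
  qed (use assms in auto)
  moreover have "card (E - X) = card E - card X" "card X \<le> card E" if "X \<in> Q" for X
    using sub[OF that] finite_ground finite_member[OF that]
    by (simp_all add: card_Diff_subset card_mono)
  ultimately show ?thesis using assms(1,3) by fastforce
qed

lemma basis_exchange:
  assumes equicard: "\<And>X Y. X \<in> Q \<Longrightarrow> Y \<in> Q \<Longrightarrow> card X = card Y"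
    and "S \<in> Q" "T \<in> Q" "e \<in> S - T"
  shows "\<exists>g\<in>T - S. insert g (S - {e}) \<in> Q"
  using assms(3,4)
proof (induction "card (S - T)" arbitrary: T rule: less_induct)
  case less
  have fin: "finite S" "finite T" using finite_member \<open>S \<in> Q\<close> less.prems(1) by auto
  show ?case
  proof (cases "S - T = {e}")
    case True
    have "card (T - S) = card (S - T)"
      using card_Int_Diff[OF fin(1), of T] card_Int_Diff[OF fin(2), of S]
        equicard[OF \<open>S \<in> Q\<close> less.prems(1)]
      by (simp add: Int_commute)
    with True obtain g where "T - S = {g}" by (auto simp: card_1_singleton_iff)
    with True have "insert g (S - {e}) = T" by blast
    with \<open>T - S = {g}\<close> less.prems(1) show ?thesis by auto
  next
    case False
    with less.prems obtain f where f: "f \<in> S - T" "f \<noteq> e" by blast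
    with less.prems obtain U where U: "U \<in> Q" "T \<inter> S \<subseteq> U" "U \<subseteq> T \<union> S" "f \<in> U" "e \<notin> U"
      using separating_member[OF less.prems(1) \<open>S \<in> Q\<close>, of f e] by blast
    have "card (S - U) < card (S - T)"
      using U f fin by (intro psubset_card_mono) auto
    with less.hyps[of U] U less.prems obtain g where "g \<in> U - S" "insert g (S - {e}) \<in> Q" by blast
    with U show ?thesis by blast
  qed
qed

lemma equicardinal_matroid:
  assumes "Q \<noteq> {}" "\<And>X Y. X \<in> Q \<Longrightarrow> Y \<in> Q \<Longrightarrow> card X = card Y"
  shows "matroid E {I. \<exists>B\<in>Q. I \<subseteq> B}" and "bases {I. \<exists>B\<in>Q. I \<subseteq> B} = Q"
  using matroid_of_bases[OF finite_ground family_subset assms basis_exchange[OF assms(2)]] by blast+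

lemma superset_in_top_layer:
  assumes "S \<in> Q" "S\<^sub>t \<in> Q" "\<And>T. T \<in> Q \<Longrightarrow> card T \<le> card S\<^sub>t"
  obtains S' where "S' \<in> Q" "S \<subseteq> S'" "card S' = card S\<^sub>t"
proof -
  have "finite Q" using finite_subset[OF family_subset] finite_ground by simp
  obtain S' where "S' \<in> Q" "S \<subseteq> S'" and maximal: "\<And>U. U \<in> Q \<Longrightarrow> S' \<subseteq> U \<Longrightarrow> U = S'"
    using finite_has_maximal2[OF \<open>finite Q\<close> \<open>S \<in> Q\<close>] by (metis (full_types))
  with card_le_maximal_member[OF \<open>S' \<in> Q\<close> maximal assms(2)] assms(3) that show ?thesis
    by (simp add: le_antisym)
qed

lemma subset_in_bottom_layer:
  assumes "S \<in> Q" "S\<^sub>b \<in> Q" "\<And>T. T \<in> Q \<Longrightarrow> card S\<^sub>b \<le> card T"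
  obtains S' where "S' \<in> Q" "S' \<subseteq> S" "card S' = card S\<^sub>b"
proof -
  have "finite Q" using finite_subset[OF family_subset] finite_ground by simp
  obtain S' where "S' \<in> Q" "S' \<subseteq> S" and minimal: "\<And>U. U \<in> Q \<Longrightarrow> U \<subseteq> S' \<Longrightarrow> U = S'"
    using finite_has_minimal2[OF \<open>finite Q\<close> \<open>S \<in> Q\<close>] by (metis (full_types))
  with card_ge_minimal_member[OF \<open>S' \<in> Q\<close> minimal assms(2)] assms(3) that show ?thesis
    by (simp add: le_antisym)
qed

lemma matroid_decomposition:
  assumes "S\<^sub>t \<in> Q" "\<And>T. T \<in> Q \<Longrightarrow> card T \<le> card S\<^sub>t"
    and "S\<^sub>b \<in> Q" "\<And>T. T \<in> Q \<Longrightarrow> card S\<^sub>b \<le> card T"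
    and "tropically_rayleigh {T \<in> Q. card T = card S\<^sub>t}"
    and "tropically_rayleigh {T \<in> Q. card T = card S\<^sub>b}"
  obtains M N where "matroid E M" "matroid E N" "Q = M \<inter> spanning E N"
    "bases M = {T \<in> Q. card T = card S\<^sub>t}" "bases N = {T \<in> Q. card T = card S\<^sub>b}"
proof -
  let ?Q\<^sub>t = "{T \<in> Q. card T = card S\<^sub>t}" and ?Q\<^sub>b = "{T \<in> Q. card T = card S\<^sub>b}"
  interpret top: tropically_rayleigh_family E ?Q\<^sub>t
    using assms(5) family_subset finite_ground by unfold_locales auto
  interpret bottom: tropically_rayleigh_family E ?Q\<^sub>b
    using assms(6) family_subset finite_ground by unfold_locales auto
  define M where "M = {I. \<exists>B\<in>?Q\<^sub>t. I \<subseteq> B}"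
  define N where "N = {I. \<exists>B\<in>?Q\<^sub>b. I \<subseteq> B}"
  have "?Q\<^sub>t \<noteq> {}" "?Q\<^sub>b \<noteq> {}" using assms(1,3) by auto
  moreover have "card X = card Y" if "X \<in> ?Q\<^sub>t" "Y \<in> ?Q\<^sub>t" for X Y using that by simp
  moreover have "card X = card Y" if "X \<in> ?Q\<^sub>b" "Y \<in> ?Q\<^sub>b" for X Y using that by simp
  ultimately have M: "matroid E M" "bases M = ?Q\<^sub>t" and N: "matroid E N" "bases N = ?Q\<^sub>b"
    unfolding M_def N_def using top.equicardinal_matroid bottom.equicardinal_matroid by blast+
  have "S \<in> M \<inter> spanning E N" if "S \<in> Q" for S
  proof -
    obtain S' where "S' \<in> Q" "S \<subseteq> S'" "card S' = card S\<^sub>t"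
      using superset_in_top_layer[OF \<open>S \<in> Q\<close> assms(1,2)] .
    moreover obtain S'' where "S'' \<in> Q" "S'' \<subseteq> S" "card S'' = card S\<^sub>b"
      using subset_in_bottom_layer[OF \<open>S \<in> Q\<close> assms(3,4)] .
    ultimately show ?thesis
      using \<open>S \<in> Q\<close> family_subset by (auto simp: M_def spanning_def N(2))
  qed
  moreover have "I \<in> Q" if "I \<in> M \<inter> spanning E N" for I
  proof -
    from that obtain B where "B \<in> ?Q\<^sub>t" "I \<subseteq> B" unfolding M_def by blast
    moreover from that obtain B' where "B' \<in> ?Q\<^sub>b" "B' \<subseteq> I" unfolding spanning_def N(2) by blast
    ultimately show ?thesis using member_between[of B' B I] by simp
  qed
  ultimately have "Q = M \<inter> spanning E N" by blast
  with M N that show ?thesis by blast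
qed

end

section \<open>Decomposing the support of a Rayleigh weight\<close>

lemma rayleigh_weight_card_layer:
  fixes s :: real
  assumes "finite E" "rayleigh_weight E \<omega>" "S \<subseteq> E" "\<omega> S \<noteq> 0" "s \<noteq> 0"
    and extremal: "\<And>T. T \<subseteq> E \<Longrightarrow> \<omega> T \<noteq> 0 \<Longrightarrow> s * card T \<le> s * card S"
  shows "rayleigh_weight E (\<lambda>T. if card T = card S then \<omega> T else 0)"
proof -
  have "wdegree_le E (\<lambda>_. s) \<omega> (s * card S)"
    using extremal by (simp add: wdegree_le_def mult.commute)
  moreover have "sum (\<lambda>_. s) S = s * card S" by simp
  ultimately have "rayleigh_weight E (homogeneous_part (\<lambda>_. s) (s * card S) \<omega>)"
    by (rule rayleigh_weight_homogeneous_part[OF assms(1,2) _ assms(3,4)])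
  moreover have "homogeneous_part (\<lambda>_. s) (s * card S) \<omega> = (\<lambda>T. if card T = card S then \<omega> T else 0)"
    using \<open>s \<noteq> 0\<close> by (auto simp: homogeneous_part_def mult.commute)
  ultimately show ?thesis by simp
qed

lemma rayleigh_weight_extremal_layers:
  assumes "finite E" "rayleigh_weight E \<omega>"
  defines "Q \<equiv> {S. S \<subseteq> E \<and> 0 < \<omega> S}"
  obtains S\<^sub>t S\<^sub>b where "S\<^sub>t \<in> Q" "\<And>T. T \<in> Q \<Longrightarrow> card T \<le> card S\<^sub>t"
    "S\<^sub>b \<in> Q" "\<And>T. T \<in> Q \<Longrightarrow> card S\<^sub>b \<le> card T"
    "rayleigh_weight E (\<lambda>T. if card T = card S\<^sub>t then \<omega> T else 0)"
    "rayleigh_weight E (\<lambda>T. if card T = card S\<^sub>b then \<omega> T else 0)"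
proof -
  have Q_iff: "T \<in> Q \<longleftrightarrow> T \<subseteq> E \<and> \<omega> T \<noteq> 0" for T
    using rayleigh_weight_nonneg[OF assms(2), of T] by (auto simp: Q_def less_le)
  have "finite Q" using assms(1) by (simp add: Q_def)
  obtain S\<^sub>0 where "S\<^sub>0 \<subseteq> E" "\<omega> S\<^sub>0 \<noteq> 0" by (rule rayleigh_weight_nonzero[OF assms(2)])
  then have "Q \<noteq> {}" using Q_iff by blast
  obtain S\<^sub>t where "S\<^sub>t \<in> Q" and top: "\<And>T. T \<in> Q \<Longrightarrow> card T \<le> card S\<^sub>t"
    using finite_obtains_max[OF \<open>finite Q\<close> \<open>Q \<noteq> {}\<close>, where f = card] by blast
  obtain S\<^sub>b where "S\<^sub>b \<in> Q" and bottom: "\<And>T. T \<in> Q \<Longrightarrow> card S\<^sub>b \<le> card T"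
    using finite_obtains_min[OF \<open>finite Q\<close> \<open>Q \<noteq> {}\<close>, where f = card] by blast
  have "rayleigh_weight E (\<lambda>T. if card T = card S\<^sub>t then \<omega> T else 0)"
    using \<open>S\<^sub>t \<in> Q\<close> top
    by (intro rayleigh_weight_card_layer[OF assms(1,2), of _ 1]) (auto simp: Q_iff)
  moreover have "rayleigh_weight E (\<lambda>T. if card T = card S\<^sub>b then \<omega> T else 0)"
    using \<open>S\<^sub>b \<in> Q\<close> bottom
    by (intro rayleigh_weight_card_layer[OF assms(1,2), of _ "- 1"]) (auto simp: Q_iff)
  ultimately show ?thesis using that \<open>S\<^sub>t \<in> Q\<close> top \<open>S\<^sub>b \<in> Q\<close> bottom by blast
qed

lemma rayleigh_weight_support_decomposition:
  assumes "finite E" "rayleigh_weight E \<omega>"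
  defines "Q \<equiv> {S. S \<subseteq> E \<and> 0 < \<omega> S}"
  obtains M N where "matroid E M" "matroid E N" "Q = M \<inter> spanning E N"
    "bases M \<subseteq> Q" "rayleigh_weight E (\<lambda>S. if S \<in> bases M then \<omega> S else 0)"
    "bases N \<subseteq> Q" "rayleigh_weight E (\<lambda>S. if S \<in> bases N then \<omega> S else 0)"
proof -
  interpret tropically_rayleigh_family E Q
  proof
    show "finite E" "Q \<subseteq> Pow E" using assms(1) by (auto simp: Q_def)
    show "tropically_rayleigh Q"
      unfolding Q_def by (rule rayleigh_weight_tropically_rayleigh[OF assms(1,2)])
  qed
  obtain S\<^sub>t S\<^sub>b where "S\<^sub>t \<in> Q" and top: "\<And>T. T \<in> Q \<Longrightarrow> card T \<le> card S\<^sub>t"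
    and "S\<^sub>b \<in> Q" and bottom: "\<And>T. T \<in> Q \<Longrightarrow> card S\<^sub>b \<le> card T"
    and \<omega>\<^sub>t: "rayleigh_weight E (\<lambda>T. if card T = card S\<^sub>t then \<omega> T else 0)"
    and \<omega>\<^sub>b: "rayleigh_weight E (\<lambda>T. if card T = card S\<^sub>b then \<omega> T else 0)"
    using rayleigh_weight_extremal_layers[OF assms(1,2)] unfolding Q_def by blast
  have layer: "{T. T \<subseteq> E \<and> 0 < (if card T = k then \<omega> T else 0)} = {T \<in> Q. card T = k}" for k
    by (auto simp: Q_def)
  obtain M N where MN: "matroid E M" "matroid E N" "Q = M \<inter> spanning E N"
    and M: "bases M = {T \<in> Q. card T = card S\<^sub>t}" and N: "bases N = {T \<in> Q. card T = card S\<^sub>b}"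
    using matroid_decomposition[OF \<open>S\<^sub>t \<in> Q\<close> top \<open>S\<^sub>b \<in> Q\<close> bottom]
      rayleigh_weight_tropically_rayleigh[OF assms(1) \<omega>\<^sub>t, unfolded layer]
      rayleigh_weight_tropically_rayleigh[OF assms(1) \<omega>\<^sub>b, unfolded layer]
    by blast
  have zero: "\<omega> S = 0" if "S \<subseteq> E" "S \<notin> Q" for S
    using that rayleigh_weight_nonneg[OF assms(2) that(1)] by (auto simp: Q_def)
  have "rayleigh_weight E (\<lambda>S. if S \<in> bases M then \<omega> S else 0)"
    by (rule rayleigh_weight_cong[OF \<omega>\<^sub>t]) (use zero in \<open>auto simp: M\<close>)
  moreover have "rayleigh_weight E (\<lambda>S. if S \<in> bases N then \<omega> S else 0)"
    by (rule rayleigh_weight_cong[OF \<omega>\<^sub>b]) (use zero in \<open>auto simp: N\<close>)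
  ultimately show ?thesis using that MN by (simp add: M N subset_iff)
qed

lemma rayleigh_matroid_decomposition:
  assumes "finite E" "rayleigh E Q"
  obtains M N where "matroid E M" "matroid E N" "Q = M \<inter> spanning E N"
    "rayleigh E (bases M)" "rayleigh E (bases N)"
proof -
  define \<omega> :: "'a set \<Rightarrow> real" where "\<omega> = (\<lambda>S. if S \<in> Q then 1 else 0)"
  have "rayleigh_weight E \<omega>" and supp: "{S. S \<subseteq> E \<and> 0 < \<omega> S} = Q"
    using assms(2) by (auto simp: rayleigh_def \<omega>_def)
  have rayleigh_bases: "rayleigh E B"
    if "B \<subseteq> Q" "rayleigh_weight E (\<lambda>S. if S \<in> B then \<omega> S else 0)" for B
  proof -
    have "(\<lambda>S. if S \<in> B then \<omega> S else 0) = (\<lambda>S. if S \<in> B then 1 else 0)"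
      using that(1) by (auto simp: \<omega>_def fun_eq_iff)
    with that assms(2) show ?thesis unfolding rayleigh_def by auto
  qed
  obtain M N where "matroid E M" "matroid E N" "Q = M \<inter> spanning E N"
    and M: "bases M \<subseteq> Q" "rayleigh_weight E (\<lambda>S. if S \<in> bases M then \<omega> S else 0)"
    and N: "bases N \<subseteq> Q" "rayleigh_weight E (\<lambda>S. if S \<in> bases N then \<omega> S else 0)"
    using rayleigh_weight_support_decomposition[OF assms(1) \<open>rayleigh_weight E \<omega>\<close>, unfolded supp] .
  with rayleigh_bases[OF M] rayleigh_bases[OF N] that show ?thesis by blast
qed

lemma weakly_rayleigh_matroid_decomposition:
  assumes "finite E" "weakly_rayleigh E Q"
  obtains M N where "matroid E M" "matroid E N" "Q = M \<inter> spanning E N"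
    "weakly_rayleigh E (bases M)" "weakly_rayleigh E (bases N)"
proof -
  obtain \<omega> where "rayleigh_weight E \<omega>" and supp: "{S. S \<subseteq> E \<and> 0 < \<omega> S} = Q"
    using assms(2) by (auto simp: weakly_rayleigh_def)
  have weakly_rayleigh_bases: "weakly_rayleigh E B"
    if "B \<subseteq> Q" "rayleigh_weight E (\<lambda>S. if S \<in> B then \<omega> S else 0)" for B
    unfolding weakly_rayleigh_def using that supp
    by (intro conjI exI[of _ "\<lambda>S. if S \<in> B then \<omega> S else 0"]) auto
  obtain M N where "matroid E M" "matroid E N" "Q = M \<inter> spanning E N"
    and M: "bases M \<subseteq> Q" "rayleigh_weight E (\<lambda>S. if S \<in> bases M then \<omega> S else 0)"
    and N: "bases N \<subseteq> Q" "rayleigh_weight E (\<lambda>S. if S \<in> bases N then \<omega> S else 0)"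
    using rayleigh_weight_support_decomposition[OF assms(1) \<open>rayleigh_weight E \<omega>\<close>, unfolded supp] .
  with weakly_rayleigh_bases[OF M] weakly_rayleigh_bases[OF N] that show ?thesis by blast
qed

theorem corollary4p11:
  fixes E :: "'a set" and Q :: "'a set set"
  assumes "finite E" and "Q \<subseteq> Pow E"
  shows "(rayleigh E Q \<longrightarrow>
            (\<exists>M N. matroid E M \<and> matroid E N \<and> Q = M \<inter> spanning E N \<and>
                   rayleigh E (bases M) \<and> rayleigh E (bases N)))
       \<and> (weakly_rayleigh E Q \<longrightarrow>
            (\<exists>M N. matroid E M \<and> matroid E N \<and> Q = M \<inter> spanning E N \<and>
                   weakly_rayleigh E (bases M) \<and> weakly_rayleigh E (bases N)))"
  using rayleigh_matroid_decomposition[OF assms(1)]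
    weakly_rayleigh_matroid_decomposition[OF assms(1)] by blast

end
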